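(* Let $G$ be a $2$-edge-connected graph, $C\in\mathrm{CP}(G)$, and $G'$ a connected component of $G-C$ that contains at least one edge. If $C'\in\mathrm{CP}(G')$ is not a coparallel class of $G$, then $C'=C_1\,\dot\cup\, C_2$ for two coparallel classes $C_1,C_2\in\mathrm{CP}(G)$.
   Context: All graphs are finite, simple and undirected. For $\emptyset\subsetneq S\subsetneq V(G)$, $\delta(S)$ is the set of edges with exactly one endpoint in $S$ (a cut). An edge $e$ is a bridge if $\{e\}=\delta(S)$ for some $S$. A graph is $2$-edge-connected if it is connected and has no bridges. Two distinct edges $e,f$ are coparallel if $\{e,f\}$ is an inclusion-wise minimal cut. A coparallel class is an inclusion-wise maximal set of non-bridge edges any two distinct elements of which are coparallel (a non-bridge edge in no $2$-cut forms a singleton class). $\mathrm{CP}(G)$ is the set of coparallel classes of $G$. $G-C$ denotes $G$ with the edges of $C$ deleted. *)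

theory Defs
  imports Main
begin

definition graph :: "'a set \<Rightarrow> 'a set set \<Rightarrow> bool" where
  "graph V E \<longleftrightarrow> finite V \<and> (\<forall>e\<in>E. \<exists>u v. u \<noteq> v \<and> u \<in> V \<and> v \<in> V \<and> e = {u, v})"

definition delta :: "'a set set \<Rightarrow> 'a set \<Rightarrow> 'a set set" where
  "delta E S = {e \<in> E. card (e \<inter> S) = 1}"

definition is_cut :: "'a set \<Rightarrow> 'a set set \<Rightarrow> 'a set set \<Rightarrow> bool" where
  "is_cut V E F \<longleftrightarrow> (\<exists>S. {} \<subset> S \<and> S \<subset> V \<and> F = delta E S)"

definition is_bridge :: "'a set \<Rightarrow> 'a set set \<Rightarrow> 'a set \<Rightarrow> bool" where
  "is_bridge V E e \<longleftrightarrow> e \<in> E \<and> is_cut V E {e}"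

definition reach :: "'a set set \<Rightarrow> 'a \<Rightarrow> 'a \<Rightarrow> bool" where
  "reach E = (\<lambda>x y. {x, y} \<in> E)\<^sup>*\<^sup>*"

definition connected_graph :: "'a set \<Rightarrow> 'a set set \<Rightarrow> bool" where
  "connected_graph V E \<longleftrightarrow> V \<noteq> {} \<and> (\<forall>u\<in>V. \<forall>v\<in>V. reach E u v)"

definition two_edge_connected :: "'a set \<Rightarrow> 'a set set \<Rightarrow> bool" where
  "two_edge_connected V E \<longleftrightarrow> connected_graph V E \<and> (\<forall>e\<in>E. \<not> is_bridge V E e)"

definition minimal_cut :: "'a set \<Rightarrow> 'a set set \<Rightarrow> 'a set set \<Rightarrow> bool" where
  "minimal_cut V E F \<longleftrightarrow> is_cut V E F \<and> (\<forall>F'. F' \<subset> F \<longrightarrow> \<not> is_cut V E F')"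

definition coparallel :: "'a set \<Rightarrow> 'a set set \<Rightarrow> 'a set \<Rightarrow> 'a set \<Rightarrow> bool" where
  "coparallel V E e f \<longleftrightarrow> e \<in> E \<and> f \<in> E \<and> e \<noteq> f \<and> minimal_cut V E {e, f}"

definition coparallel_set :: "'a set \<Rightarrow> 'a set set \<Rightarrow> 'a set set \<Rightarrow> bool" where
  "coparallel_set V E C \<longleftrightarrow> C \<subseteq> E \<and> (\<forall>e\<in>C. \<not> is_bridge V E e)
     \<and> (\<forall>e\<in>C. \<forall>f\<in>C. e \<noteq> f \<longrightarrow> coparallel V E e f)"

definition CP :: "'a set \<Rightarrow> 'a set set \<Rightarrow> 'a set set set" where
  "CP V E = {C. C \<noteq> {} \<and> coparallel_set V E C \<and>
                 (\<forall>D. coparallel_set V E D \<and> C \<subseteq> D \<longrightarrow> D = C)}"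

definition component :: "'a set \<Rightarrow> 'a set set \<Rightarrow> 'a set \<Rightarrow> bool" where
  "component V E K \<longleftrightarrow> (\<exists>v\<in>V. K = {u \<in> V. reach E v u})"

definition induced_edges :: "'a set set \<Rightarrow> 'a set \<Rightarrow> 'a set set" where
  "induced_edges E K = {e \<in> E. e \<subseteq> K}"

end

theory Submission
  imports Defs
begin

text \<open>Coparallelism together with equality is an equivalence relation on the edges, because
  cuts are closed under symmetric difference, and the coparallel classes are its classes.
  Fix c0 in C. Modulo the cuts {x, c0} with x in C, every cut of the component G' of
  G - C lifts to a cut of G that equals it or adds the single edge c0. Hence G' is
  2-edge-connected, every coparallel class of G meeting G' lies inside a class of G', and two
  edges e, h coparallel in G' but not in G span a cut {c0, e, h} of G. Two such cuts
  {c0, e, g} and {c0, e, h} have symmetric difference {g, h}, so a class of G' meets at most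
  two classes of G.\<close>

section \<open>Cuts\<close>

lemma graph_edgeE:
  assumes "graph V E" "e \<in> E"
  obtains u v where "u \<noteq> v" "u \<in> V" "v \<in> V" "e = {u, v}"
  using assms unfolding graph_def by blast

lemma graph_edge_distinct: "graph V E \<Longrightarrow> {x, y} \<in> E \<Longrightarrow> x \<noteq> y"
  unfolding graph_def by (metis doubleton_eq_iff)

lemma graph_edge_vertices: "graph V E \<Longrightarrow> {x, y} \<in> E \<Longrightarrow> x \<in> V \<and> y \<in> V"
  unfolding graph_def by (metis doubleton_eq_iff)

lemma graph_mono: "graph V E \<Longrightarrow> F \<subseteq> E \<Longrightarrow> graph V F"
  unfolding graph_def by blast

lemma graph_finite_edges:
  assumes "graph V E" shows "finite E"
proof -
  have "E \<subseteq> Pow V" "finite V" using assms unfolding graph_def by auto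
  then show ?thesis using finite_subset by blast
qed

lemma edge_in_delta_iff:
  "u \<noteq> v \<Longrightarrow> {u, v} \<in> E \<Longrightarrow> {u, v} \<in> delta E S \<longleftrightarrow> (u \<in> S \<longleftrightarrow> v \<notin> S)"
  unfolding delta_def by (cases "u \<in> S"; cases "v \<in> S") auto

lemma delta_subset: "delta E S \<subseteq> E"
  unfolding delta_def by auto

lemma delta_empty: "delta E {} = {}"
  unfolding delta_def by auto

lemma delta_Diff: "delta (E - C) S = delta E S - C"
  unfolding delta_def by auto

lemma delta_symdiff:
  assumes "graph V E"
  shows "delta E (sym_diff S T) = sym_diff (delta E S) (delta E T)"
proof (rule set_eqI)
  fix e
  show "e \<in> delta E (sym_diff S T) \<longleftrightarrow> e \<in> sym_diff (delta E S) (delta E T)"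
  proof (cases "e \<in> E")
    case True
    then obtain u v where "u \<noteq> v" "u \<in> V" "v \<in> V" "e = {u, v}"
      by (rule graph_edgeE[OF assms])
    then show ?thesis using edge_in_delta_iff[of u v E] True by auto
  qed (use delta_subset in blast)
qed

lemma delta_Int_vertices:
  assumes "graph V E" shows "delta E (S \<inter> V) = delta E S"
proof (rule set_eqI)
  fix e
  show "e \<in> delta E (S \<inter> V) \<longleftrightarrow> e \<in> delta E S"
  proof (cases "e \<in> E")
    case True
    then obtain u v where "u \<noteq> v" "u \<in> V" "v \<in> V" "e = {u, v}"
      by (rule graph_edgeE[OF assms])
    then show ?thesis using edge_in_delta_iff[of u v E] True by auto
  qed (use delta_subset in blast)
qed

lemma delta_vertices:
  assumes "graph V E" shows "delta E V = {}"
proof -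
  have "e \<notin> delta E V" if e: "e \<in> E" for e
  proof -
    obtain u v where "u \<noteq> v" "u \<in> V" "v \<in> V" "e = {u, v}"
      using e by (rule graph_edgeE[OF assms])
    then show ?thesis using edge_in_delta_iff[of u v E V] e by simp
  qed
  then show ?thesis using delta_subset by blast
qed

lemma is_cut_delta:
  assumes "graph V E" "delta E S \<noteq> {}"
  shows "is_cut V E (delta E S)"
proof -
  have "S \<inter> V \<noteq> {}" "S \<inter> V \<noteq> V"
    using assms delta_Int_vertices[OF assms(1), of S] by (auto simp: delta_empty delta_vertices)
  then have "{} \<subset> S \<inter> V" "S \<inter> V \<subset> V" by auto
  then show ?thesis
    unfolding is_cut_def using delta_Int_vertices[OF assms(1), of S] by metis
qed

lemma reach_closed:
  assumes "reach E u y" "\<And>x y. x \<in> S \<Longrightarrow> {x, y} \<in> E \<Longrightarrow> y \<in> S" "u \<in> S"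
  shows "y \<in> S"
  using assms(1) unfolding reach_def
  by (induction rule: rtranclp_induct) (simp_all add: assms(2,3))

lemma reach_sym: "reach E a b \<Longrightarrow> reach E b a"
  unfolding reach_def
proof (induction rule: rtranclp_induct)
  case (step x y)
  then have "{y, x} \<in> E" by (simp add: insert_commute)
  with step.IH show ?case by (simp add: converse_rtranclp_into_rtranclp)
qed simp

lemma reach_trans: "reach E a b \<Longrightarrow> reach E b c \<Longrightarrow> reach E a c"
  unfolding reach_def by (rule rtranclp_trans)

lemma connected_cut_nonempty:
  assumes "graph V E" "connected_graph V E" "is_cut V E F"
  shows "F \<noteq> {}"
proof
  assume "F = {}"
  obtain S where S: "{} \<subset> S" "S \<subset> V" "delta E S = {}"
    using assms(3) \<open>F = {}\<close> unfolding is_cut_def by blast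
  obtain u w where u: "u \<in> S" and w: "w \<in> V" "w \<notin> S" using S by blast
  have "u \<in> V" using u S(2) by blast
  with w(1) have "reach E u w" using assms(2) unfolding connected_graph_def by blast
  moreover have "y \<in> S" if "x \<in> S" "{x, y} \<in> E" for x y
  proof (rule ccontr)
    assume "y \<notin> S"
    have "x \<noteq> y" using graph_edge_distinct[OF assms(1) that(2)] .
    then have "{x, y} \<in> delta E S" using edge_in_delta_iff[of x y E S] that \<open>y \<notin> S\<close> by blast
    with S(3) show False by simp
  qed
  ultimately show False using reach_closed[of E u w S] u w by blast
qed

section \<open>Coparallel classes\<close>

text \<open>In a 2-edge-connected graph this is the reflexive closure of coparallelism.\<close>
definition copar_equiv :: "'a set set \<Rightarrow> 'a set \<Rightarrow> 'a set \<Rightarrow> bool" where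
  "copar_equiv E e f \<longleftrightarrow> e = f \<or> (\<exists>S. delta E S = {e, f})"

definition copar_class :: "'a set set \<Rightarrow> 'a set \<Rightarrow> 'a set set" where
  "copar_class E e = {f \<in> E. copar_equiv E e f}"

lemma copar_equiv_refl [simp]: "copar_equiv E e e"
  unfolding copar_equiv_def by simp

lemma copar_equiv_sym: "copar_equiv E e f \<Longrightarrow> copar_equiv E f e"
  unfolding copar_equiv_def by (metis insert_commute)

lemma copar_equiv_trans:
  assumes "graph V E" "copar_equiv E e f" "copar_equiv E f g"
  shows "copar_equiv E e g"
proof (cases "e = f \<or> f = g \<or> e = g")
  case False
  then obtain S T where S: "delta E S = {e, f}" and T: "delta E T = {f, g}"
    using assms(2,3) unfolding copar_equiv_def by blast
  have "delta E (sym_diff S T) = {e, g}"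
    unfolding delta_symdiff[OF assms(1)] S T using False by auto
  then show ?thesis unfolding copar_equiv_def by blast
qed (use assms(2,3) in auto)

lemma coparallel_iff_copar_equiv:
  assumes "graph V E" "two_edge_connected V E"
  shows "coparallel V E e f \<longleftrightarrow> e \<in> E \<and> f \<in> E \<and> e \<noteq> f \<and> copar_equiv E e f"
proof
  assume "coparallel V E e f"
  then show "e \<in> E \<and> f \<in> E \<and> e \<noteq> f \<and> copar_equiv E e f"
    unfolding coparallel_def minimal_cut_def is_cut_def copar_equiv_def by metis
next
  assume ef: "e \<in> E \<and> f \<in> E \<and> e \<noteq> f \<and> copar_equiv E e f"
  then obtain S where S: "delta E S = {e, f}" unfolding copar_equiv_def by blast
  have "\<not> is_cut V E F" if "F \<subset> {e, f}" for F
  proof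
    assume cut: "is_cut V E F"
    then have "F \<noteq> {}"
      using connected_cut_nonempty assms unfolding two_edge_connected_def by blast
    with that have "F = {e} \<or> F = {f}" by blast
    with cut ef assms(2) show False unfolding two_edge_connected_def is_bridge_def by blast
  qed
  then show "coparallel V E e f"
    unfolding coparallel_def minimal_cut_def using ef is_cut_delta[OF assms(1), of S] S by auto
qed

lemma coparallel_set_iff:
  assumes "graph V E" "two_edge_connected V E"
  shows "coparallel_set V E D \<longleftrightarrow> D \<subseteq> E \<and> (\<forall>e\<in>D. \<forall>f\<in>D. copar_equiv E e f)"
  using assms(2) unfolding coparallel_set_def coparallel_iff_copar_equiv[OF assms] two_edge_connected_def
  by (metis copar_equiv_refl subsetD)

lemma copar_class_pairwise:
  "graph V E \<Longrightarrow> f \<in> copar_class E e \<Longrightarrow> g \<in> copar_class E e \<Longrightarrow> copar_equiv E f g"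
  unfolding copar_class_def by (blast intro: copar_equiv_trans copar_equiv_sym)

lemma copar_class_disjoint:
  assumes "graph V E" "\<not> copar_equiv E e g"
  shows "copar_class E e \<inter> copar_class E g = {}"
proof -
  have False if "copar_equiv E e f" "copar_equiv E g f" for f
    using assms copar_equiv_trans[OF assms(1) that(1) copar_equiv_sym[OF that(2)]] by blast
  then show ?thesis unfolding copar_class_def by blast
qed

lemma copar_class_coparallel_set:
  assumes "graph V E" "two_edge_connected V E"
  shows "coparallel_set V E (copar_class E e)"
  unfolding coparallel_set_iff[OF assms]
proof
  show "copar_class E e \<subseteq> E" unfolding copar_class_def by blast
  show "\<forall>f\<in>copar_class E e. \<forall>g\<in>copar_class E e. copar_equiv E f g"
    using copar_class_pairwise[OF assms(1)] by blast
qed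

lemma copar_class_in_CP:
  assumes "graph V E" "two_edge_connected V E" "e \<in> E"
  shows "copar_class E e \<in> CP V E"
proof -
  have e: "e \<in> copar_class E e" using assms(3) unfolding copar_class_def by simp
  have "D \<subseteq> copar_class E e" if "coparallel_set V E D" "e \<in> D" for D
    using that unfolding coparallel_set_iff[OF assms(1,2)] copar_class_def by blast
  with e show ?thesis
    unfolding CP_def using copar_class_coparallel_set[OF assms(1,2)] by blast
qed

lemma CP_eq_copar_class:
  assumes "graph V E" "two_edge_connected V E" "C \<in> CP V E" "e \<in> C"
  shows "C = copar_class E e"
proof -
  have "C \<subseteq> copar_class E e"
    using assms(3,4) unfolding CP_def coparallel_set_iff[OF assms(1,2)] copar_class_def by blast
  then show ?thesis
    using assms(3) copar_class_coparallel_set[OF assms(1,2)] unfolding CP_def by blast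
qed

lemma CP_pairwise_copar_equiv:
  assumes "graph V E" "two_edge_connected V E" "C \<in> CP V E"
  shows "\<forall>x\<in>C. \<forall>y\<in>C. copar_equiv E x y"
  using assms(3) unfolding CP_def coparallel_set_iff[OF assms(1,2)] by blast

section \<open>The components of G - C\<close>

lemma component_subset: "component V F K \<Longrightarrow> K \<subseteq> V"
  unfolding component_def by blast

lemma component_closed:
  assumes "graph V F" "component V F K" "x \<in> K" "{x, y} \<in> F"
  shows "y \<in> K"
proof -
  obtain v where K: "K = {u \<in> V. reach F v u}" using assms(2) unfolding component_def by blast
  have "reach F v x" using assms(3) K by blast
  then have "reach F v y"
    using assms(4) unfolding reach_def by (rule rtranclp.rtrancl_into_rtrancl)
  then show ?thesis using K graph_edge_vertices[OF assms(1,4)] by blast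
qed

lemma delta_induced_edges: "delta (induced_edges F K) S = delta F S \<inter> induced_edges F K"
  unfolding delta_def induced_edges_def by auto

lemma graph_induced_edges: "graph V F \<Longrightarrow> K \<subseteq> V \<Longrightarrow> graph K (induced_edges F K)"
  unfolding graph_def induced_edges_def by (metis (no_types, lifting) finite_subset insert_subset mem_Collect_eq)

lemma connected_component:
  assumes "graph V F" "component V F K"
  shows "connected_graph K (induced_edges F K)"
proof -
  obtain v where v: "v \<in> V" and K: "K = {u \<in> V. reach F v u}"
    using assms(2) unfolding component_def by blast
  have reach_v: "reach (induced_edges F K) v u" if "reach F v u" for u
    using that unfolding reach_def
  proof (induction rule: rtranclp_induct)
    case (step x y)
    have "x \<in> V" using graph_edge_vertices[OF assms(1)] step(2) by simp
    with step(1) have x: "x \<in> K" using K unfolding reach_def by simp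
    have y: "y \<in> K" using component_closed[OF assms x] step(2) by simp
    have "{x, y} \<in> induced_edges F K"
      using step(2) x y unfolding induced_edges_def by simp
    with step.IH show ?case by (rule rtranclp.rtrancl_into_rtrancl)
  qed simp
  have "reach (induced_edges F K) a b" if "a \<in> K" "b \<in> K" for a b
    using reach_trans[OF reach_sym reach_v] reach_v that K by blast
  moreover have "v \<in> K" using v K unfolding reach_def by simp
  ultimately show ?thesis unfolding connected_graph_def by blast
qed

lemma delta_induced_edges_component:
  assumes "graph V F" "component V F K" "S \<subseteq> K"
  shows "delta (induced_edges F K) S = delta F S"
proof -
  have "e \<in> induced_edges F K" if "e \<in> delta F S" for e
  proof -
    have "e \<in> F" using that delta_subset by blast
    then obtain a b where ab: "a \<noteq> b" "a \<in> V" "b \<in> V" "e = {a, b}"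
      by (rule graph_edgeE[OF assms(1)])
    then have F: "{a, b} \<in> F" "{b, a} \<in> F" using \<open>e \<in> F\<close> by (simp_all add: insert_commute)
    have "a \<in> S \<or> b \<in> S" using edge_in_delta_iff[OF ab(1) F(1)] that ab(4) by blast
    then have "a \<in> K \<and> b \<in> K"
      using assms(3) component_closed[OF assms(1,2)] F by blast
    then show ?thesis using F(1) ab(4) unfolding induced_edges_def by blast
  qed
  then show ?thesis unfolding delta_induced_edges by blast
qed

text \<open>Add the cuts {x, c0} for the edges x of X one at a time.\<close>
lemma cut_symdiff_subset_singleton:
  assumes "graph V E" "\<forall>x\<in>C. \<forall>y\<in>C. copar_equiv E x y" "c0 \<in> C" "finite X" "X \<subseteq> C"
  shows "\<exists>T. sym_diff (delta E T) X \<subseteq> {c0}"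
  using assms(4,5)
proof (induction X rule: finite_induct)
  case empty
  show ?case using delta_empty by blast
next
  case (insert x X)
  then obtain T where T: "sym_diff (delta E T) X \<subseteq> {c0}" by blast
  show ?case
  proof (cases "x = c0")
    case True
    with T show ?thesis by blast
  next
    case False
    have "copar_equiv E x c0" using assms(2,3) insert.prems by blast
    with False obtain Tx where Tx: "delta E Tx = {x, c0}" unfolding copar_equiv_def by blast
    have "sym_diff (delta E (sym_diff T Tx)) (insert x X) \<subseteq> {c0}"
      unfolding delta_symdiff[OF assms(1)] Tx using T insert.hyps(2) False by blast
    then show ?thesis by blast
  qed
qed

text \<open>Only edges of C leave K, so a cut of the component differs from a cut of G by edges
  of C, which are cancelled up to c0.\<close>
lemma cut_of_component_lifts:
  assumes "graph V E" "\<forall>x\<in>C. \<forall>y\<in>C. copar_equiv E x y" "c0 \<in> C" "component V (E - C) K"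
  defines "E' \<equiv> induced_edges (E - C) K"
  shows "\<exists>S'. delta E S' = delta E' S \<or> delta E S' = insert c0 (delta E' S)"
proof -
  define S0 where "S0 = S \<inter> K"
  have gC: "graph V (E - C)" using graph_mono[OF assms(1)] by blast
  have "graph K E'"
    unfolding E'_def using graph_induced_edges[OF gC component_subset[OF assms(4)]] .
  then have "delta E' S = delta E' S0" unfolding S0_def by (rule delta_Int_vertices[symmetric])
  also have "\<dots> = delta E S0 - C"
    unfolding E'_def S0_def delta_induced_edges_component[OF gC assms(4) Int_lower2] delta_Diff ..
  finally have A: "delta E' S = delta E S0 - C" .
  define X where "X = delta E S0 \<inter> C"
  have "finite X" unfolding X_def using graph_finite_edges[OF assms(1)] delta_subset
    by (blast intro: finite_subset)
  then obtain T where T: "sym_diff (delta E T) X \<subseteq> {c0}"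
    using cut_symdiff_subset_singleton[OF assms(1-3)] X_def by blast
  have "delta E T \<subseteq> C" using T assms(3) unfolding X_def by blast
  then have "delta E (sym_diff S0 T) = delta E' S \<union> sym_diff (delta E T) X"
    unfolding delta_symdiff[OF assms(1)] A X_def by blast
  moreover have "sym_diff (delta E T) X = {} \<or> sym_diff (delta E T) X = {c0}" using T by blast
  ultimately show ?thesis by auto
qed

locale class_deleted_component =
  fixes V :: "'a set" and E :: "'a set set" and C :: "'a set set" and K :: "'a set"
  assumes graph: "graph V E"
    and two_edge_conn: "two_edge_connected V E"
    and C_in_CP: "C \<in> CP V E"
    and component: "component V (E - C) K"
begin

abbreviation EK :: "'a set set" where
  "EK \<equiv> induced_edges (E - C) K"

lemma EK_subset: "EK \<subseteq> E - C"
  unfolding induced_edges_def by blast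

lemma delta_EK: "delta EK S = delta E S \<inter> EK"
  using EK_subset unfolding delta_induced_edges delta_Diff by blast

lemma graph_EK: "graph K EK"
  using graph_induced_edges[OF graph_mono[OF graph] component_subset[OF component]] by blast

lemma cut_lifts:
  assumes "c0 \<in> C"
  shows "\<exists>S'. delta E S' = delta EK S \<or> delta E S' = insert c0 (delta EK S)"
  using cut_of_component_lifts[OF graph CP_pairwise_copar_equiv[OF graph two_edge_conn C_in_CP]
      assms component] .

lemma copar_equiv_class_mem:
  assumes "c \<in> C" "copar_equiv E c e" "e \<in> E"
  shows "e \<in> C"
  using CP_eq_copar_class[OF graph two_edge_conn C_in_CP assms(1)] assms(2,3)
  unfolding copar_class_def by blast

lemma two_edge_connected_EK: "two_edge_connected K EK"
  unfolding two_edge_connected_def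
proof (intro conjI ballI notI)
  show "connected_graph K EK"
    using connected_component[OF graph_mono[OF graph] component] by blast
  fix e assume e: "e \<in> EK" and "is_bridge K EK e"
  then obtain S where S: "delta EK S = {e}" unfolding is_bridge_def is_cut_def by metis
  obtain c0 where c0: "c0 \<in> C" using C_in_CP unfolding CP_def by blast
  obtain S' where "delta E S' = {e} \<or> delta E S' = {c0, e}" using cut_lifts[OF c0, of S] S by auto
  then show False
  proof
    assume "delta E S' = {e}"
    then have "is_cut V E {e}" using is_cut_delta[OF graph, of S'] by simp
    then show False using two_edge_conn e EK_subset
      unfolding two_edge_connected_def is_bridge_def by blast
  next
    assume "delta E S' = {c0, e}"
    then have "copar_equiv E c0 e" unfolding copar_equiv_def by blast
    then show False using copar_equiv_class_mem[OF c0] e EK_subset by blast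
  qed
qed

lemma copar_class_subset_copar_class_EK:
  assumes x: "x \<in> EK"
  shows "copar_class E x \<subseteq> copar_class EK x"
proof
  fix f assume f: "f \<in> copar_class E x"
  show "f \<in> copar_class EK x"
  proof (cases "f = x")
    case True
    with x show ?thesis unfolding copar_class_def by simp
  next
    case False
    with f obtain T where T: "delta E T = {x, f}" unfolding copar_class_def copar_equiv_def by auto
    have "x \<in> E - C" using x EK_subset by blast
    then have "f \<notin> C"
      using copar_equiv_class_mem copar_equiv_sym f unfolding copar_class_def by blast
    have "f \<in> EK"
    proof (rule ccontr)
      assume "f \<notin> EK"
      then have "delta EK T = {x}" using T x unfolding delta_EK by auto
      then have "is_bridge K EK x" using is_cut_delta[OF graph_EK, of T] x unfolding is_bridge_def by simp
      then show False using two_edge_connected_EK x unfolding two_edge_connected_def by blast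
    qed
    then have "delta EK T = {x, f}" using T x unfolding delta_EK by auto
    then show ?thesis using \<open>f \<in> EK\<close> unfolding copar_class_def copar_equiv_def by blast
  qed
qed

lemma triangle_cut:
  assumes "c0 \<in> C" "h \<in> copar_class EK e" "\<not> copar_equiv E e h"
  shows "\<exists>S. delta E S = {c0, e, h}"
proof -
  have "e \<noteq> h" using assms(3) by auto
  then obtain S where S: "delta EK S = {e, h}"
    using assms(2) unfolding copar_class_def copar_equiv_def by auto
  obtain S' where "delta E S' = {e, h} \<or> delta E S' = {c0, e, h}"
    using cut_lifts[OF assms(1), of S] S by auto
  moreover have "delta E S' \<noteq> {e, h}" using assms(3) unfolding copar_equiv_def by blast
  ultimately show ?thesis by blast
qed

lemma copar_class_EK_subset_two_classes:
  assumes g: "g \<in> copar_class EK e" and eg: "\<not> copar_equiv E e g"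
  shows "copar_class EK e \<subseteq> copar_class E e \<union> copar_class E g"
proof
  fix h assume h: "h \<in> copar_class EK e"
  then have "h \<in> E" using EK_subset unfolding copar_class_def by blast
  obtain c0 where c0: "c0 \<in> C" using C_in_CP unfolding CP_def by blast
  show "h \<in> copar_class E e \<union> copar_class E g"
  proof (cases "copar_equiv E e h \<or> g = h")
    case True
    then show ?thesis using \<open>h \<in> E\<close> unfolding copar_class_def by auto
  next
    case False
    obtain S1 S2 where S1: "delta E S1 = {c0, e, g}" and S2: "delta E S2 = {c0, e, h}"
      using triangle_cut[OF c0 g eg] triangle_cut[OF c0 h] False by blast
    have "e \<noteq> g" using eg by auto
    with g obtain S where "delta EK S = {e, g}" unfolding copar_class_def copar_equiv_def by auto
    then have "{e, g, h} \<subseteq> EK" using delta_subset[of EK S] h unfolding copar_class_def by auto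
    then have "c0 \<notin> {e, g, h}" using c0 EK_subset by blast
    then have "delta E (sym_diff S1 S2) = {g, h}"
      unfolding delta_symdiff[OF graph] S1 S2 using False eg by auto
    then show ?thesis using \<open>h \<in> E\<close> unfolding copar_class_def copar_equiv_def by blast
  qed
qed

end

theorem mainTheorem4:
  fixes V :: "'a set" and E :: "'a set set"
    and C C' :: "'a set set" and K :: "'a set"
  assumes "graph V E"
    and "two_edge_connected V E"
    and "C \<in> CP V E"
    and "component V (E - C) K"
    and "induced_edges (E - C) K \<noteq> {}"
    and "C' \<in> CP K (induced_edges (E - C) K)"
    and "C' \<notin> CP V E"
  shows "\<exists>C1 C2. C1 \<in> CP V E \<and> C2 \<in> CP V E \<and> C1 \<inter> C2 = {} \<and> C' = C1 \<union> C2"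
proof -
  interpret class_deleted_component V E C K using assms(1-4) by unfold_locales
  have C'_EK: "C' \<subseteq> EK" using assms(6) unfolding CP_def coparallel_set_def by blast
  have C'_class: "C' = copar_class EK x" if "x \<in> C'" for x
    using CP_eq_copar_class[OF graph_EK two_edge_connected_EK assms(6) that] .
  have C'_E: "x \<in> E" if "x \<in> C'" for x using that C'_EK EK_subset by blast
  have class_E_subset: "copar_class E x \<subseteq> C'" if "x \<in> C'" for x
    using copar_class_subset_copar_class_EK[of x] C'_EK C'_class[OF that] that by blast
  have class_E_CP: "copar_class E x \<in> CP V E" if "x \<in> C'" for x
    using copar_class_in_CP[OF graph two_edge_conn C'_E[OF that]] .
  obtain e where e: "e \<in> C'" using assms(6) unfolding CP_def by blast
  have "copar_class E e \<noteq> C'" using class_E_CP[OF e] assms(7) by auto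
  with class_E_subset[OF e] obtain g where g: "g \<in> C'" "g \<notin> copar_class E e" by blast
  then have eg: "\<not> copar_equiv E e g" using C'_E unfolding copar_class_def by blast
  have "C' \<subseteq> copar_class E e \<union> copar_class E g"
    using copar_class_EK_subset_two_classes[OF _ eg] C'_class[OF e] g(1) by simp
  then have "C' = copar_class E e \<union> copar_class E g"
    using class_E_subset[OF e] class_E_subset[OF g(1)] by blast
  then show ?thesis
    using class_E_CP[OF e] class_E_CP[OF g(1)] copar_class_disjoint[OF graph eg] by blast
qed

end
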